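(* Let $(W,S)$ be a dihedral Coxeter system, i.e. $|S|=2$. For reflections $t,t'\in T$, we have $\ell(t')<\ell(t)$ if and only if $t'\sqsubseteq t$ and $t'\neq t$.
   Context: $(W,S)$ is a Coxeter system with length function $\ell$, reflections $T=\{wsw^{-1}:w\in W,\ s\in S\}$ and Bruhat order $\leqslant$. The Bruhat graph $\Omega_{W,S}$ has vertex set $W$ and an arrow $u\to v$ iff $uv^{-1}\in T$ and $u<v$; $\Omega_{W,S}(Y)$ is its induced subgraph on $Y$. A reflection subgroup $W'$ (a subgroup generated by reflections) has canonical Coxeter generators $S'=\{t\in T:N(t)\cap W'=\{t\}\}$, where $N(v)=\{t\in T:\ell(tv)<\ell(v)\}$; it is dihedral if $|S'|=2$. $t\sqsubseteq' t'$ iff $t=t'$ or there is a dihedral reflection subgroup $W'\ni t,t'$ such that the directed distance from $t$ to $t'$ in $\Omega_{W,S}(W')$ is finite; $\sqsubseteq$ is the transitive closure of $\sqsubseteq'$. *)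

theory Defs
  imports "HOL-Algebra.Algebra"
begin

definition word_prod :: "('a, 'b) monoid_scheme \<Rightarrow> 'a list \<Rightarrow> 'a" where
  "word_prod G ws = foldr (\<lambda>x y. x \<otimes>\<^bsub>G\<^esub> y) ws \<one>\<^bsub>G\<^esub>"

text \<open>Coxeter matrix entry: m(s,s') is the order of s s' (only finite orders give relators).\<close>
definition cox_relators :: "('a, 'b) monoid_scheme \<Rightarrow> 'a set \<Rightarrow> 'a list set" where
  "cox_relators G S = {concat (replicate m [s, s']) | s s' m.
      s \<in> S \<and> s' \<in> S \<and> 0 < m \<and> (s \<otimes>\<^bsub>G\<^esub> s') [^]\<^bsub>G\<^esub> m = \<one>\<^bsub>G\<^esub> \<and>
      (\<forall>k. 0 < k \<and> k < m \<longrightarrow> (s \<otimes>\<^bsub>G\<^esub> s') [^]\<^bsub>G\<^esub> k \<noteq> \<one>\<^bsub>G\<^esub>)}"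

text \<open>Congruence on words in S generated by the Coxeter relations (s s')^m(s,s') = 1
  (including s^2 = 1 for s = s').  Since generators are involutions, words in S suffice.\<close>
inductive cox_eq :: "('a, 'b) monoid_scheme \<Rightarrow> 'a set \<Rightarrow> 'a list \<Rightarrow> 'a list \<Rightarrow> bool"
  for G S where
  refl: "cox_eq G S u u"
| sym: "cox_eq G S u v \<Longrightarrow> cox_eq G S v u"
| trans: "cox_eq G S u v \<Longrightarrow> cox_eq G S v w \<Longrightarrow> cox_eq G S u w"
| rel: "r \<in> cox_relators G S \<Longrightarrow> cox_eq G S (u @ r @ v) (u @ v)"

text \<open>(W,S) is a Coxeter system: W is generated by the involutions S, and every relation
  among the generators is a consequence of the Coxeter relations, i.e. W has the Coxeter
  presentation on S.\<close>
definition coxeter_system :: "('a, 'b) monoid_scheme \<Rightarrow> 'a set \<Rightarrow> bool" where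
  "coxeter_system G S \<longleftrightarrow> group G \<and> S \<subseteq> carrier G \<and>
     (\<forall>s\<in>S. s \<noteq> \<one>\<^bsub>G\<^esub> \<and> s \<otimes>\<^bsub>G\<^esub> s = \<one>\<^bsub>G\<^esub>) \<and>
     generate G S = carrier G \<and>
     (\<forall>ws \<in> lists S. word_prod G ws = \<one>\<^bsub>G\<^esub> \<longrightarrow> cox_eq G S ws [])"

definition cox_length :: "('a, 'b) monoid_scheme \<Rightarrow> 'a set \<Rightarrow> 'a \<Rightarrow> nat" where
  "cox_length G S w = (LEAST n. \<exists>ws \<in> lists S. length ws = n \<and> word_prod G ws = w)"

definition reflections :: "('a, 'b) monoid_scheme \<Rightarrow> 'a set \<Rightarrow> 'a set" where
  "reflections G S = {w \<otimes>\<^bsub>G\<^esub> s \<otimes>\<^bsub>G\<^esub> inv\<^bsub>G\<^esub> w | w s. w \<in> carrier G \<and> s \<in> S}"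

definition bruhat_le :: "('a, 'b) monoid_scheme \<Rightarrow> 'a set \<Rightarrow> 'a \<Rightarrow> 'a \<Rightarrow> bool" where
  "bruhat_le G S = (\<lambda>x y. x \<in> carrier G \<and> (\<exists>t \<in> reflections G S. y = t \<otimes>\<^bsub>G\<^esub> x \<and>
                        cox_length G S x < cox_length G S y))\<^sup>*\<^sup>*"

definition bruhat_lt :: "('a, 'b) monoid_scheme \<Rightarrow> 'a set \<Rightarrow> 'a \<Rightarrow> 'a \<Rightarrow> bool" where
  "bruhat_lt G S u v \<longleftrightarrow> bruhat_le G S u v \<and> u \<noteq> v"

definition bruhat_arrow :: "('a, 'b) monoid_scheme \<Rightarrow> 'a set \<Rightarrow> 'a \<Rightarrow> 'a \<Rightarrow> bool" where
  "bruhat_arrow G S u v \<longleftrightarrow> u \<in> carrier G \<and> v \<in> carrier G \<and>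
     u \<otimes>\<^bsub>G\<^esub> inv\<^bsub>G\<^esub> v \<in> reflections G S \<and> bruhat_lt G S u v"

definition induced_reach :: "('a, 'b) monoid_scheme \<Rightarrow> 'a set \<Rightarrow> 'a set \<Rightarrow> 'a \<Rightarrow> 'a \<Rightarrow> bool" where
  "induced_reach G S Y u v \<longleftrightarrow> u \<in> Y \<and> v \<in> Y \<and>
     (\<lambda>x y. x \<in> Y \<and> y \<in> Y \<and> bruhat_arrow G S x y)\<^sup>*\<^sup>* u v"

definition left_descent_refl :: "('a, 'b) monoid_scheme \<Rightarrow> 'a set \<Rightarrow> 'a \<Rightarrow> 'a set" where
  "left_descent_refl G S v = {t \<in> reflections G S. cox_length G S (t \<otimes>\<^bsub>G\<^esub> v) < cox_length G S v}"

definition reflection_subgroup :: "('a, 'b) monoid_scheme \<Rightarrow> 'a set \<Rightarrow> 'a set \<Rightarrow> bool" where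
  "reflection_subgroup G S W' \<longleftrightarrow> (\<exists>Rs. Rs \<subseteq> reflections G S \<and> W' = generate G Rs)"

definition canonical_gens :: "('a, 'b) monoid_scheme \<Rightarrow> 'a set \<Rightarrow> 'a set \<Rightarrow> 'a set" where
  "canonical_gens G S W' = {t \<in> reflections G S. left_descent_refl G S t \<inter> W' = {t}}"

definition dihedral_refl_subgroup :: "('a, 'b) monoid_scheme \<Rightarrow> 'a set \<Rightarrow> 'a set \<Rightarrow> bool" where
  "dihedral_refl_subgroup G S W' \<longleftrightarrow> reflection_subgroup G S W' \<and> card (canonical_gens G S W') = 2"

definition sqsub1 :: "('a, 'b) monoid_scheme \<Rightarrow> 'a set \<Rightarrow> 'a \<Rightarrow> 'a \<Rightarrow> bool" where
  "sqsub1 G S t t' \<longleftrightarrow> t = t' \<or>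
     (\<exists>W'. dihedral_refl_subgroup G S W' \<and> t \<in> W' \<and> t' \<in> W' \<and> induced_reach G S W' t t')"

definition sqsub :: "('a, 'b) monoid_scheme \<Rightarrow> 'a set \<Rightarrow> 'a \<Rightarrow> 'a \<Rightarrow> bool" where
  "sqsub G S = (sqsub1 G S)\<^sup>+\<^sup>+"

end

theory Submission
  imports Defs
begin

text \<open>Lengths strictly increase along the arrows of the Bruhat graph, hence along \<open>\<sqsubseteq>\<close>; this
  gives one direction in every Coxeter system. Conversely, in a dihedral system W is itself a
  dihedral reflection subgroup (its canonical generators are S), so it suffices to join t' to t by a
  directed path in the Bruhat graph of W. Reduced words in two letters alternate, so a reduced word
  of t' is a prefix or a suffix of the suffix e of length \<open>\<ell>(t') + 1\<close> of a reduced word of t: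
  t' reaches e in one step, and e reaches t by restoring the remaining letters on the left.\<close>

lemma successively_take: "successively P xs \<Longrightarrow> successively P (take n xs)"
  by (metis append_take_drop_id successively_append_iff)

lemma two_letter_alternating_eqI:
  assumes "xs \<in> lists {a, b}" "ys \<in> lists {a, b}"
    and "successively (\<noteq>) xs" "successively (\<noteq>) ys"
    and "length xs = length ys" "hd xs = hd ys"
  shows "xs = ys"
  using assms
proof (induction xs arbitrary: ys rule: list.induct)
  case (Cons x xs)
  note prems = Cons.prems
  then obtain ys' where ys: "ys = x # ys'" by (cases ys) auto
  have "hd xs = hd ys'"
  proof (cases xs)
    case (Cons x2 xs')
    moreover have "ys' \<noteq> []" using prems ys Cons by auto
    then obtain y2 ys'' where "ys' = y2 # ys''" by (cases ys') auto
    ultimately show ?thesis using prems ys by (auto simp: successively_Cons)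
  qed (use ys prems in simp)
  with Cons ys show ?case by (auto simp: successively_Cons)
qed simp

text \<open>An alternating word in two letters determines all shorter ones up to their first letter, so
  a word one letter shorter is either its prefix or its suffix.\<close>

lemma two_letter_alternating_prefix_or_suffix:
  assumes "xs \<in> lists {a, b}" "ys \<in> lists {a, b}"
    and "successively (\<noteq>) xs" "successively (\<noteq>) ys"
    and "length xs = Suc (length ys)"
  shows "ys = take (length ys) xs \<or> ys = tl xs"
proof (cases "hd ys = hd xs \<or> ys = []")
  case True
  moreover have "hd (take (length ys) xs) = hd xs \<or> ys = []"
    by (cases ys) simp_all
  ultimately have "ys = take (length ys) xs"
    using assms successively_take[OF assms(3)]
    by (intro two_letter_alternating_eqI[of _ a b])
      (auto simp: in_lists_conv_set dest: in_set_takeD)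
  then show ?thesis ..
next
  case False
  then obtain x x2 xs' where xs: "xs = x # x2 # xs'"
    using assms(5) by (cases xs; cases "tl xs") auto
  obtain y ys' where ys: "ys = y # ys'" using False by (cases ys) auto
  have "y = x2" using xs ys False assms(1-3) by (auto simp: successively_Cons)
  then have "ys = tl xs"
    using assms xs ys by (intro two_letter_alternating_eqI[of _ a b]) (auto simp: successively_Cons)
  then show ?thesis ..
qed

lemma induced_reach_refl: "u \<in> Y \<Longrightarrow> induced_reach G S Y u u"
  unfolding induced_reach_def by simp

lemma induced_reach_trans:
  "induced_reach G S Y u v \<Longrightarrow> induced_reach G S Y v w \<Longrightarrow> induced_reach G S Y u w"
  unfolding induced_reach_def by (meson rtranclp_trans)

lemma induced_reach_arrow:
  "u \<in> Y \<Longrightarrow> v \<in> Y \<Longrightarrow> bruhat_arrow G S u v \<Longrightarrow> induced_reach G S Y u v"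
  unfolding induced_reach_def by (simp add: r_into_rtranclp)

lemma bruhat_le_length_less:
  "bruhat_le G S u v \<Longrightarrow> u = v \<or> cox_length G S u < cox_length G S v"
  unfolding bruhat_le_def by (induction rule: rtranclp_induct) auto

lemma induced_reach_length_less:
  assumes "induced_reach G S Y u v"
  shows "u = v \<or> cox_length G S u < cox_length G S v"
proof -
  have "(\<lambda>x y. x \<in> Y \<and> y \<in> Y \<and> bruhat_arrow G S x y)\<^sup>*\<^sup>* u v"
    using assms unfolding induced_reach_def by blast
  then show ?thesis
  proof (induction rule: rtranclp_induct)
    case (step v w)
    then have "bruhat_le G S v w"
      unfolding bruhat_arrow_def bruhat_lt_def by simp
    then have "v = w \<or> cox_length G S v < cox_length G S w"
      by (rule bruhat_le_length_less)
    with step.IH show ?case by auto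
  qed simp
qed

lemma sqsub1_length_less: "sqsub1 G S u v \<Longrightarrow> u = v \<or> cox_length G S u < cox_length G S v"
  unfolding sqsub1_def using induced_reach_length_less by metis

lemma sqsub_length_less:
  assumes "sqsub G S u v"
  shows "u = v \<or> cox_length G S u < cox_length G S v"
  using assms unfolding sqsub_def
proof (induction rule: tranclp_induct)
  case (step v w)
  with sqsub1_length_less[OF step.hyps(2)] show ?case by auto
qed (rule sqsub1_length_less)

lemma (in group) inv_mult_cancel_left [simp]:
  "w \<in> carrier G \<Longrightarrow> x \<in> carrier G \<Longrightarrow> inv w \<otimes> (w \<otimes> x) = x"
  by (simp add: m_assoc[symmetric])

locale coxeter_group =
  fixes G :: "('a, 'b) monoid_scheme" (structure) and S :: "'a set"
  assumes coxeter_system: "coxeter_system G S"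
begin

sublocale group G
  using coxeter_system by (simp add: coxeter_system_def)

lemma gens_subset_carrier: "S \<subseteq> carrier G"
  using coxeter_system by (simp add: coxeter_system_def)

lemma gen_closed [intro, simp]: "s \<in> S \<Longrightarrow> s \<in> carrier G"
  using gens_subset_carrier by blast

lemma gen_neq_one: "s \<in> S \<Longrightarrow> s \<noteq> \<one>"
  using coxeter_system by (simp add: coxeter_system_def)

lemma gen_mult_self: "s \<in> S \<Longrightarrow> s \<otimes> s = \<one>"
  using coxeter_system by (simp add: coxeter_system_def)

lemma inv_gen: "s \<in> S \<Longrightarrow> inv s = s"
  by (simp add: gen_mult_self inv_equality)

lemma generate_gens: "generate G S = carrier G"
  using coxeter_system by (simp add: coxeter_system_def)

lemma word_prod_Nil [simp]: "word_prod G [] = \<one>"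
  by (simp add: word_prod_def)

lemma word_prod_Cons [simp]: "word_prod G (x # xs) = x \<otimes> word_prod G xs"
  by (simp add: word_prod_def)

lemma word_prod_closed [intro, simp]: "ws \<in> lists S \<Longrightarrow> word_prod G ws \<in> carrier G"
  by (induction ws) auto

lemma word_prod_append:
  "ws \<in> lists S \<Longrightarrow> vs \<in> lists S \<Longrightarrow> word_prod G (ws @ vs) = word_prod G ws \<otimes> word_prod G vs"
  by (induction ws) (auto simp: m_assoc)

lemma word_prod_surj: "g \<in> carrier G \<Longrightarrow> \<exists>ws\<in>lists S. word_prod G ws = g"
  unfolding generate_gens[symmetric]
proof (induction rule: generate.induct)
  case one
  show ?case by (intro bexI[of _ "[]"]) auto
next
  case (incl h)
  then show ?case by (intro bexI[of _ "[h]"]) auto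
next
  case (inv h)
  then show ?case by (intro bexI[of _ "[h]"]) (auto simp: inv_gen)
next
  case (eng h1 h2)
  then obtain u v where "u \<in> lists S" "v \<in> lists S" "word_prod G u = h1" "word_prod G v = h2"
    by blast
  then show ?case by (intro bexI[of _ "u @ v"]) (auto simp: word_prod_append)
qed

lemma cox_length_le_length: "ws \<in> lists S \<Longrightarrow> cox_length G S (word_prod G ws) \<le> length ws"
  unfolding cox_length_def by (rule Least_le) blast

definition reduced :: "'a list \<Rightarrow> bool" where
  "reduced ws \<longleftrightarrow> ws \<in> lists S \<and> cox_length G S (word_prod G ws) = length ws"

lemma reduced_word_exists: "g \<in> carrier G \<Longrightarrow> \<exists>ws. reduced ws \<and> word_prod G ws = g"
proof -
  assume "g \<in> carrier G"
  then have "\<exists>n. \<exists>ws \<in> lists S. length ws = n \<and> word_prod G ws = g"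
    using word_prod_surj by blast
  then have "\<exists>ws \<in> lists S. length ws = cox_length G S g \<and> word_prod G ws = g"
    unfolding cox_length_def by (rule LeastI_ex)
  then obtain ws where "ws \<in> lists S" "length ws = cox_length G S g" "word_prod G ws = g"
    by blast
  then show ?thesis unfolding reduced_def by auto
qed

lemma cox_length_eq_0D: "g \<in> carrier G \<Longrightarrow> cox_length G S g = 0 \<Longrightarrow> g = \<one>"
  using reduced_word_exists unfolding reduced_def by force

lemma reduced_drop:
  assumes "reduced ws"
  shows "reduced (drop j ws)"
proof -
  let ?u = "take j ws" and ?v = "drop j ws"
  have words: "?u \<in> lists S" "?v \<in> lists S"
    using assms unfolding reduced_def by (auto dest: in_set_takeD in_set_dropD)
  obtain v' where v': "reduced v'" "word_prod G v' = word_prod G ?v"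
    using reduced_word_exists words by blast
  then have "word_prod G (?u @ v') = word_prod G ws"
    using words word_prod_append unfolding reduced_def by (metis append_take_drop_id)
  then have "length ws \<le> length (?u @ v')"
    using assms v' words cox_length_le_length[of "?u @ v'"] unfolding reduced_def by simp
  then have "length ?v \<le> cox_length G S (word_prod G ?v)"
    using v' unfolding reduced_def by simp
  then show ?thesis
    using words cox_length_le_length[of ?v] unfolding reduced_def by simp
qed

lemma reduced_Cons: "reduced (x # ws) \<Longrightarrow> reduced ws"
  using reduced_drop[of "x # ws" 1] by simp

text \<open>A square s s of a generator could be cancelled, giving a shorter word for the same element.\<close>

lemma reduced_successively_neq: "reduced ws \<Longrightarrow> successively (\<noteq>) ws"
proof (induction ws rule: induct_list012)
  case (3 x y zs)
  have "x \<noteq> y"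
  proof
    assume "x = y"
    then have "word_prod G (x # y # zs) = word_prod G zs" and "zs \<in> lists S"
      using "3.prems" gen_mult_self unfolding reduced_def by (auto simp: m_assoc[symmetric])
    then show False
      using "3.prems" cox_length_le_length[of zs] unfolding reduced_def by simp
  qed
  with 3 show ?case by (simp add: reduced_Cons)
qed simp_all

lemma reflection_closed: "r \<in> reflections G S \<Longrightarrow> r \<in> carrier G"
  unfolding reflections_def by auto

lemma gen_in_reflections: "s \<in> S \<Longrightarrow> s \<in> reflections G S"
  unfolding reflections_def by (intro CollectI exI[of _ \<one>] exI[of _ s]) simp

lemma conj_gen_in_reflections: "w \<in> carrier G \<Longrightarrow> s \<in> S \<Longrightarrow> w \<otimes> s \<otimes> inv w \<in> reflections G S"
  unfolding reflections_def by blast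

lemma reflection_inv:
  assumes "r \<in> reflections G S"
  shows "inv r = r"
proof -
  obtain w s where r: "r = w \<otimes> s \<otimes> inv w" "w \<in> carrier G" "s \<in> S"
    using assms unfolding reflections_def by auto
  then have "r \<otimes> r = w \<otimes> (s \<otimes> s) \<otimes> inv w" by (simp add: m_assoc)
  then show ?thesis
    using r gen_mult_self reflection_closed[OF assms] by (simp add: inv_equality)
qed

lemma reflection_neq_one:
  assumes "r \<in> reflections G S"
  shows "r \<noteq> \<one>"
proof
  assume r1: "r = \<one>"
  obtain w s where r: "r = w \<otimes> s \<otimes> inv w" "w \<in> carrier G" "s \<in> S"
    using assms unfolding reflections_def by auto
  then have "s = inv w \<otimes> r \<otimes> w" by (simp add: m_assoc)
  also have "\<dots> = \<one>" using r1 r(2) by simp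
  finally show False using r(3) gen_neq_one by blast
qed

lemma bruhat_arrow_left:
  assumes "u \<in> carrier G" "r \<in> reflections G S" "cox_length G S u < cox_length G S (r \<otimes> u)"
  shows "bruhat_arrow G S u (r \<otimes> u)"
proof -
  have r: "r \<in> carrier G" using reflection_closed assms(2) .
  have "bruhat_le G S u (r \<otimes> u)"
    unfolding bruhat_le_def using assms by (intro r_into_rtranclp) blast
  moreover have "u \<otimes> inv (r \<otimes> u) = r"
    using assms r reflection_inv by (simp add: inv_mult_group m_assoc[symmetric])
  ultimately show ?thesis
    unfolding bruhat_arrow_def bruhat_lt_def using assms r by auto
qed

lemma bruhat_arrow_right:
  assumes "u \<in> carrier G" "s \<in> S" "cox_length G S u < cox_length G S (u \<otimes> s)"
  shows "bruhat_arrow G S u (u \<otimes> s)"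
proof -
  have "u \<otimes> s = (u \<otimes> s \<otimes> inv u) \<otimes> u"
    using assms by (simp add: m_assoc)
  then show ?thesis
    using bruhat_arrow_left[OF assms(1) conj_gen_in_reflections[OF assms(1,2)]] assms(3) by simp
qed

lemma induced_reach_drop:
  assumes "reduced ws" "j \<le> length ws"
  shows "induced_reach G S (carrier G) (word_prod G (drop j ws)) (word_prod G ws)"
  using assms(2)
proof (induction j)
  case 0
  show ?case using assms(1) unfolding reduced_def by (simp add: induced_reach_refl)
next
  case (Suc j)
  have j: "j < length ws" using Suc.prems by simp
  let ?v = "word_prod G (drop (Suc j) ws)"
  have drop_j: "drop j ws = ws ! j # drop (Suc j) ws"
    using j by (simp add: Cons_nth_drop_Suc)
  have "reduced (drop j ws)" "reduced (drop (Suc j) ws)"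
    using reduced_drop assms(1) by blast+
  then have "cox_length G S ?v < cox_length G S (ws ! j \<otimes> ?v)" and words: "ws ! j \<in> S" "?v \<in> carrier G"
    using j unfolding reduced_def drop_j by auto
  then have "bruhat_arrow G S ?v (word_prod G (drop j ws))"
    unfolding drop_j using bruhat_arrow_left gen_in_reflections by simp
  then have "induced_reach G S (carrier G) ?v (word_prod G (drop j ws))"
    using words unfolding drop_j by (intro induced_reach_arrow) auto
  with Suc show ?case using induced_reach_trans by fastforce
qed

lemma canonical_gens_carrier: "canonical_gens G S (carrier G) = S"
proof (intro equalityI subsetI)
  fix s assume s: "s \<in> S"
  have "cox_length G S s \<le> 1" using cox_length_le_length[of "[s]"] s by simp
  moreover have "cox_length G S s \<noteq> 0" using cox_length_eq_0D gen_neq_one s by blast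
  ultimately have length_s: "cox_length G S s = 1" by simp
  have "cox_length G S \<one> = 0" using cox_length_le_length[of "[]"] by simp
  then have "s \<in> left_descent_refl G S s"
    unfolding left_descent_refl_def using s gen_in_reflections gen_mult_self length_s by simp
  moreover have "r = s" if "r \<in> left_descent_refl G S s" "r \<in> carrier G" for r
  proof -
    have "cox_length G S (r \<otimes> s) = 0"
      using that length_s unfolding left_descent_refl_def by simp
    then have "r \<otimes> s = \<one>" using cox_length_eq_0D[of "r \<otimes> s"] that(2) s by simp
    then have "inv s = r" using inv_equality[of r s] that(2) s by simp
    then show "r = s" using inv_gen s by simp
  qed
  ultimately have "left_descent_refl G S s \<inter> carrier G = {s}" using s by blast
  then show "s \<in> canonical_gens G S (carrier G)"
    unfolding canonical_gens_def using gen_in_reflections s by blast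
next
  fix t assume "t \<in> canonical_gens G S (carrier G)"
  then have t: "t \<in> reflections G S" and descents: "left_descent_refl G S t \<inter> carrier G = {t}"
    unfolding canonical_gens_def by auto
  obtain ws where ws: "reduced ws" "word_prod G ws = t"
    using reduced_word_exists reflection_closed t by blast
  moreover have "ws \<noteq> []" using ws reflection_neq_one[OF t] by auto
  ultimately obtain s rs where s_rs: "reduced (s # rs)" "word_prod G (s # rs) = t"
    by (cases ws) auto
  have "reduced rs" using s_rs(1) by (rule reduced_Cons)
  moreover have s: "s \<in> S" and rs: "rs \<in> lists S" using s_rs(1) unfolding reduced_def by auto
  ultimately have "cox_length G S (word_prod G rs) < cox_length G S t"
    using s_rs unfolding reduced_def by auto
  moreover have "s \<otimes> t = word_prod G rs"
    using s_rs(2) word_prod_closed[OF rs] s by (auto simp: m_assoc[symmetric] gen_mult_self)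
  ultimately have "s \<in> left_descent_refl G S t"
    unfolding left_descent_refl_def using gen_in_reflections s by auto
  then show "t \<in> S" using descents s by auto
qed

lemma reflection_subgroup_carrier: "reflection_subgroup G S (carrier G)"
proof -
  have "reflections G S \<subseteq> carrier G" using reflection_closed by blast
  then have "generate G (reflections G S) \<subseteq> carrier G"
    using generate_is_subgroup subgroup.subset by blast
  moreover have "generate G S \<subseteq> generate G (reflections G S)"
    using mono_generate gen_in_reflections by blast
  ultimately show ?thesis
    unfolding reflection_subgroup_def using generate_gens by blast
qed

lemma dihedral_refl_subgroup_carrier:
  "card S = 2 \<Longrightarrow> dihedral_refl_subgroup G S (carrier G)"
  unfolding dihedral_refl_subgroup_def
  using reflection_subgroup_carrier canonical_gens_carrier by simp

lemma dihedral_induced_reach_of_length_less: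
  assumes S: "S = {a, b}" and uv: "u \<in> carrier G" "v \<in> carrier G"
    and less: "cox_length G S u < cox_length G S v"
  shows "induced_reach G S (carrier G) u v"
proof -
  obtain w where w: "reduced w" "word_prod G w = v" using reduced_word_exists uv by blast
  obtain w' where w': "reduced w'" "word_prod G w' = u" using reduced_word_exists uv by blast
  define p where "p = length w'"
  define e where "e = drop (length w - Suc p) w"
  have "p < length w" using less w w' unfolding reduced_def p_def by simp
  then have e: "reduced e" "length e = Suc p"
    unfolding e_def using reduced_drop w(1) by auto
  have e_v: "induced_reach G S (carrier G) (word_prod G e) v"
    unfolding e_def using induced_reach_drop[OF w(1), of "length w - Suc p"] w(2) by simp
  have "e \<in> lists {a, b}" "w' \<in> lists {a, b}"
    using e(1) w'(1) S unfolding reduced_def by auto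
  then have "w' = take p e \<or> w' = tl e"
    using two_letter_alternating_prefix_or_suffix[OF _ _ reduced_successively_neq[OF e(1)]
        reduced_successively_neq[OF w'(1)]] e(2)
    unfolding p_def by blast
  then have "induced_reach G S (carrier G) u (word_prod G e)"
  proof
    assume prefix: "w' = take p e"
    have e_words: "e ! p \<in> S" "w' \<in> lists S" using e w' unfolding reduced_def by auto
    have "e = w' @ [e ! p]"
      using prefix e(2) take_Suc_conv_app_nth[of p e] by simp
    then have "word_prod G e = u \<otimes> e ! p"
      using e_words w' word_prod_append[of w' "[e ! p]"] by simp
    moreover have "cox_length G S u < cox_length G S (u \<otimes> e ! p)"
      using calculation e w' unfolding reduced_def p_def by simp
    ultimately show ?thesis
      using bruhat_arrow_right[OF uv(1) e_words(1)] e_words uv(1)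
      by (simp add: induced_reach_arrow)
  next
    assume "w' = tl e"
    then show ?thesis
      using induced_reach_drop[OF e(1), of 1] e(2) w' by (simp add: drop_Suc)
  qed
  then show ?thesis using e_v by (rule induced_reach_trans)
qed

end

theorem mainTheorem4:
  fixes G :: "('a, 'b) monoid_scheme" and S :: "'a set" and t t' :: 'a
  assumes "coxeter_system G S"
    and "card S = 2"
    and "t \<in> reflections G S" and "t' \<in> reflections G S"
  shows "cox_length G S t' < cox_length G S t \<longleftrightarrow> sqsub G S t' t \<and> t' \<noteq> t"
proof
  interpret coxeter_group G S by (rule coxeter_group.intro) (fact assms(1))
  assume less: "cox_length G S t' < cox_length G S t"
  obtain a b where "S = {a, b}" using assms(2) card_2_iff by metis
  then have "induced_reach G S (carrier G) t' t"
    using dihedral_induced_reach_of_length_less reflection_closed assms(3,4) less by blast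
  then have "sqsub1 G S t' t"
    unfolding sqsub1_def using dihedral_refl_subgroup_carrier assms(2-4) reflection_closed by blast
  then have "sqsub G S t' t"
    unfolding sqsub_def by (rule tranclp.r_into_trancl)
  moreover have "t' \<noteq> t" using less by blast
  ultimately show "sqsub G S t' t \<and> t' \<noteq> t" ..
next
  assume "sqsub G S t' t \<and> t' \<noteq> t"
  then show "cox_length G S t' < cox_length G S t" using sqsub_length_less[of G S t' t] by simp
qed

end
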